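(* $\mathfrak{cp}(\mathsf{meager}\setminus\{\emptyset\},\subseteq)=\operatorname{cof}(\mathsf{meager})$.
   Context: $\mathsf{meager}$ is the ideal of meager subsets of $2^\omega$, ordered by inclusion. For a poset $(P,\le)$, $F\subseteq P$ is a comparable family if for every $p\in P$ there is $q\in F$ with $p\le q$ or $q\le p$; $\mathfrak{cp}(P)$ is the minimal size of a comparable family. $\operatorname{cof}(\mathsf{meager})$ is the minimal size of a family $\mathcal{F}\subseteq\mathsf{meager}$ such that every meager set is contained in some member of $\mathcal{F}$. *)

theory Defs
  imports "HOL-Analysis.Analysis"
begin

text \<open>Cantor space 2^omega is the type nat \<Rightarrow> bool with the product topology
  (instance from Function_Topology, bool carrying the discrete topology).\<close>

definition nowhere_dense :: "('a::topological_space) set \<Rightarrow> bool" where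
  "nowhere_dense A \<longleftrightarrow> interior (closure A) = {}"

definition meager :: "('a::topological_space) set \<Rightarrow> bool" where
  "meager M \<longleftrightarrow> (\<exists>\<F>. countable \<F> \<and> (\<forall>A\<in>\<F>. nowhere_dense A) \<and> M \<subseteq> \<Union>\<F>)"

definition meager_ideal :: "(nat \<Rightarrow> bool) set set" where
  "meager_ideal = {M. meager M}"

definition comparable_family :: "'a set \<Rightarrow> ('a \<Rightarrow> 'a \<Rightarrow> bool) \<Rightarrow> 'a set \<Rightarrow> bool" where
  "comparable_family P le F \<longleftrightarrow> F \<subseteq> P \<and> (\<forall>p\<in>P. \<exists>q\<in>F. le p q \<or> le q p)"

definition meager_cofinal_family :: "(nat \<Rightarrow> bool) set set \<Rightarrow> bool" where
  "meager_cofinal_family \<F> \<longleftrightarrow> \<F> \<subseteq> meager_ideal \<and> (\<forall>M\<in>meager_ideal. \<exists>B\<in>\<F>. M \<subseteq> B)"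

end

theory Submission
  imports Defs
begin

text \<open>Identify \<open>2\<^sup>\<omega>\<close> with \<open>2\<^sup>\<omega> \<times> 2\<^sup>\<omega>\<close> and write \<open>q\<^sub>c = {a. (a, c) \<in> q}\<close>. A base of
  the meager ideal, with \<open>\<emptyset>\<close> removed, is a comparable family. Conversely, let \<open>F\<close> be a
  comparable family of nonempty meager sets, pick a point in each \<open>q \<in> F\<close> and let \<open>S\<close> be the
  set of their second coordinates. By the easy half of the Kuratowski--Ulam theorem, \<open>q\<^sub>c\<close> is
  meager for comeager many \<open>c\<close>. If for some \<open>q\<close> all these \<open>c\<close> lie in \<open>S\<close>, then \<open>|F|\<close> is at
  least the continuum, because comeager subsets of \<open>2\<^sup>\<omega>\<close> are that large, and counting meager
  \<open>F\<^sub>\<sigma>\<close> sets gives a base of size continuum. Otherwise choose such \<open>c\<^sub>q \<notin> S\<close> for every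
  \<open>q\<close>. For a nonempty meager \<open>M\<close>, the meager set \<open>M \<times> (2\<^sup>\<omega> - S)\<close> is comparable with some
  \<open>q \<in> F\<close>; it cannot contain \<open>q\<close>, whose chosen point has second coordinate in \<open>S\<close>, so it is
  contained in \<open>q\<close>, and then \<open>M\<close> lies in the section of \<open>q\<close> at \<open>c\<^sub>q\<close>. Thus these
  sections form a base indexed by \<open>F\<close>.\<close>

lemma nowhere_dense_closedI: "closed K \<Longrightarrow> interior K = {} \<Longrightarrow> nowhere_dense K"
  unfolding nowhere_dense_def by (simp add: closure_closed)

lemma meagerI:
  "countable \<F> \<Longrightarrow> (\<And>A. A \<in> \<F> \<Longrightarrow> nowhere_dense A) \<Longrightarrow> M \<subseteq> \<Union>\<F> \<Longrightarrow> meager M"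
  unfolding meager_def by blast

lemma nowhere_dense_imp_meager: "nowhere_dense A \<Longrightarrow> meager A"
  by (rule meagerI[of "{A}"]) auto

lemma meager_subset: "meager A \<Longrightarrow> B \<subseteq> A \<Longrightarrow> meager B"
  unfolding meager_def by (meson subset_trans)

lemma meager_UN:
  assumes "countable I" and "\<And>i. i \<in> I \<Longrightarrow> meager (A i)"
  shows "meager (\<Union>i\<in>I. A i)"
proof -
  have "\<forall>i\<in>I. \<exists>\<G>. countable \<G> \<and> (\<forall>B\<in>\<G>. nowhere_dense B) \<and> A i \<subseteq> \<Union>\<G>"
    using assms(2) unfolding meager_def by blast
  then obtain \<G> where \<G>: "\<forall>i\<in>I. countable (\<G> i) \<and> (\<forall>B\<in>\<G> i. nowhere_dense B) \<and> A i \<subseteq> \<Union>(\<G> i)"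
    by (rule bchoice[THEN exE])
  show ?thesis
  proof (rule meagerI[of "\<Union>i\<in>I. \<G> i"])
    show "countable (\<Union>i\<in>I. \<G> i)" using assms(1) \<G> by auto
    show "\<And>B. B \<in> (\<Union>i\<in>I. \<G> i) \<Longrightarrow> nowhere_dense B" using \<G> by auto
    show "(\<Union>i\<in>I. A i) \<subseteq> \<Union>(\<Union>i\<in>I. \<G> i)" using \<G> by fastforce
  qed
qed

lemma meager_Un:
  assumes "meager A" and "meager B"
  shows "meager (A \<union> B)"
proof -
  have "meager (\<Union>X\<in>{A, B}. X)" by (rule meager_UN) (use assms in auto)
  then show ?thesis by simp
qed

lemma meager_closed_cover:
  assumes "meager A"
  obtains \<K> where "countable \<K>" "\<And>K. K \<in> \<K> \<Longrightarrow> closed K \<and> interior K = {}" "A \<subseteq> \<Union>\<K>"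
proof -
  obtain \<F> where \<F>: "countable \<F>" "\<forall>B\<in>\<F>. nowhere_dense B" "A \<subseteq> \<Union>\<F>"
    using assms unfolding meager_def by blast
  show ?thesis
  proof (rule that)
    show "countable (closure ` \<F>)" using \<F>(1) by simp
    show "\<And>K. K \<in> closure ` \<F> \<Longrightarrow> closed K \<and> interior K = {}"
      using \<F>(2) unfolding nowhere_dense_def by auto
    show "A \<subseteq> \<Union>(closure ` \<F>)" using \<F>(3) closure_subset by blast
  qed
qed

lemma meager_homeomorphism_image:
  assumes "homeomorphism UNIV UNIV f g" and "meager A"
  shows "meager (f ` A)"
proof -
  have hom: "homeomorphic_map euclidean euclidean f"
    using assms(1) unfolding homeomorphic_map_maps homeomorphic_maps_def homeomorphism_def
    by (auto intro!: exI[of _ g])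
  have nowhere_dense_image: "nowhere_dense (f ` B)" if "nowhere_dense B" for B
    using that homeomorphic_map_closure_of[OF hom, of B] homeomorphic_map_interior_of[OF hom]
    unfolding nowhere_dense_def by (simp add: euclidean_closure_of euclidean_interior_of)
  obtain \<F> where \<F>: "countable \<F>" "\<forall>B\<in>\<F>. nowhere_dense B" "A \<subseteq> \<Union>\<F>"
    using assms(2) unfolding meager_def by blast
  show ?thesis
  proof (rule meagerI[of "(\<lambda>B. f ` B) ` \<F>"])
    show "countable ((\<lambda>B. f ` B) ` \<F>)" using \<F>(1) by simp
    show "\<And>C. C \<in> (\<lambda>B. f ` B) ` \<F> \<Longrightarrow> nowhere_dense C" using \<F>(2) nowhere_dense_image by auto
    show "f ` A \<subseteq> \<Union>((\<lambda>B. f ` B) ` \<F>)" using \<F>(3) by blast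
  qed
qed

lemma meager_Times_UNIV:
  assumes "meager (M :: 'a::topological_space set)"
  shows "meager (M \<times> (UNIV :: 'b::topological_space set))"
proof -
  have "nowhere_dense (A \<times> (UNIV :: 'b set))" if "nowhere_dense A" for A :: "'a set"
    using that unfolding nowhere_dense_def by (simp add: closure_Times interior_Times)
  moreover obtain \<F> where "countable \<F>" "\<forall>A\<in>\<F>. nowhere_dense A" "M \<subseteq> \<Union>\<F>"
    using assms unfolding meager_def by blast
  ultimately show ?thesis
    by (intro meagerI[of "(\<lambda>A. A \<times> (UNIV :: 'b set)) ` \<F>"]) auto
qed

lemma nowhere_dense_singleton:
  assumes "closed {x}" and "\<not> open {x}"
  shows "nowhere_dense {x}"
proof (rule nowhere_dense_closedI)
  show "interior {x} = {}"
    using interior_subset[of "{x}"] open_interior[of "{x}"] assms(2) by (metis subset_singletonD)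
qed (fact assms(1))

lemma Hausdorff_space_euclidean_t2: "Hausdorff_space (euclidean :: 'a::t2_space topology)"
  unfolding Hausdorff_space_def using hausdorff by (fastforce simp: disjnt_def)

lemma not_meager_UNIV_compact_Hausdorff:
  assumes "compact_space (euclidean :: 'a::topological_space topology)"
    and "Hausdorff_space (euclidean :: 'a topology)"
  shows "\<not> meager (UNIV :: 'a set)"
proof
  assume "meager (UNIV :: 'a set)"
  then obtain \<K> :: "'a set set" where \<K>: "countable \<K>" "\<And>K. K \<in> \<K> \<Longrightarrow> closed K \<and> interior K = {}"
    "UNIV \<subseteq> \<Union>\<K>"
    using meager_closed_cover by blast
  have "locally_compact_space (euclidean :: 'a topology) \<and> regular_space (euclidean :: 'a topology)"
    using assms by (simp add: compact_imp_locally_compact_space compact_Hausdorff_imp_regular_space)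
  then have "euclidean interior_of \<Union>\<K> = {}"
    using \<K>(1,2) by (intro Baire_category_alt) (auto simp: euclidean_interior_of)
  moreover have "\<Union>\<K> = UNIV" using \<K>(3) by blast
  ultimately show False by (simp add: euclidean_interior_of)
qed

lemma closed_section:
  assumes "closed (K :: ('a::topological_space \<times> 'b::topological_space) set)"
  shows "closed {a. (a, c) \<in> K}"
proof -
  have "closed ((\<lambda>a. (a, c)) -` K)"
    by (intro closed_vimage assms continuous_intros)
  then show ?thesis by (simp add: vimage_def)
qed

lemma closed_sections_superset:
  assumes "closed (K :: ('a::topological_space \<times> 'b::topological_space) set)"
  shows "closed {c. \<forall>a\<in>U. (a, c) \<in> K}"
proof -
  have "closed ((\<lambda>c. (a, c)) -` K)" for a
    by (intro closed_vimage assms continuous_intros)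
  moreover have "{c. \<forall>a\<in>U. (a, c) \<in> K} = (\<Inter>a\<in>U. (\<lambda>c. (a, c)) -` K)" by auto
  ultimately show ?thesis by (simp add: closed_INT)
qed

lemma interior_sections_superset:
  assumes "interior (K :: ('a::topological_space \<times> 'b::topological_space) set) = {}"
    and "open U" and "U \<noteq> {}"
  shows "interior {c. \<forall>a\<in>U. (a, c) \<in> K} = {}"
proof -
  let ?E = "{c. \<forall>a\<in>U. (a, c) \<in> K}"
  have "U \<times> interior ?E \<subseteq> K" using interior_subset by fastforce
  then have "U \<times> interior ?E \<subseteq> interior K"
    using assms(2) by (simp add: interior_maximal open_Times)
  then show ?thesis using assms(1,3) by auto
qed

lemma meager_sections_nonempty_interior:
  fixes K :: "('a::second_countable_topology \<times> 'b::topological_space) set"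
  assumes "closed K" and "interior K = {}"
  shows "meager {c. interior {a. (a, c) \<in> K} \<noteq> {}}"
proof -
  obtain \<B> :: "'a set set" where \<B>: "countable \<B>" "topological_basis \<B>"
    using ex_countable_basis by blast
  define E where "E U = {c. \<forall>a\<in>U. (a, c) \<in> K}" for U
  have "meager (E U)" if "U \<in> \<B> - {{}}" for U
  proof (intro nowhere_dense_imp_meager nowhere_dense_closedI)
    show "closed (E U)" unfolding E_def using assms(1) by (rule closed_sections_superset)
    have "open U" using that topological_basis_open[OF \<B>(2)] by blast
    then show "interior (E U) = {}" unfolding E_def
      using that assms(2) by (intro interior_sections_superset) simp_all
  qed
  then have "meager (\<Union>U\<in>\<B> - {{}}. E U)"
    by (intro meager_UN) (simp_all add: \<B>(1))
  moreover have "{c. interior {a. (a, c) \<in> K} \<noteq> {}} \<subseteq> (\<Union>U\<in>\<B> - {{}}. E U)"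
  proof
    fix c assume "c \<in> {c. interior {a. (a, c) \<in> K} \<noteq> {}}"
    then obtain x where "x \<in> interior {a. (a, c) \<in> K}" by blast
    then obtain U where U: "U \<in> \<B>" "x \<in> U" "U \<subseteq> interior {a. (a, c) \<in> K}"
      using topological_basisE[OF \<B>(2) open_interior] by blast
    then have "c \<in> E U" using interior_subset unfolding E_def by blast
    then show "c \<in> (\<Union>U\<in>\<B> - {{}}. E U)" using U by blast
  qed
  ultimately show ?thesis by (rule meager_subset)
qed

lemma meager_nonmeager_sections:
  fixes Q :: "('a::second_countable_topology \<times> 'b::topological_space) set"
  assumes "meager Q"
  shows "meager {c. \<not> meager {a. (a, c) \<in> Q}}"
proof -
  obtain \<K> where \<K>: "countable \<K>" "\<And>K. K \<in> \<K> \<Longrightarrow> closed K \<and> interior K = {}" "Q \<subseteq> \<Union>\<K>"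
    using meager_closed_cover[OF assms] by metis
  let ?bad = "\<Union>K\<in>\<K>. {c. interior {a. (a, c) \<in> K} \<noteq> {}}"
  have "meager ?bad"
  proof (rule meager_UN)
    show "meager {c. interior {a. (a, c) \<in> K} \<noteq> {}}" if "K \<in> \<K>" for K
      using \<K>(2)[OF that] by (intro meager_sections_nonempty_interior) auto
  qed (fact \<K>(1))
  moreover have "{c. \<not> meager {a. (a, c) \<in> Q}} \<subseteq> ?bad"
  proof
    fix c assume c: "c \<in> {c. \<not> meager {a. (a, c) \<in> Q}}"
    show "c \<in> ?bad"
    proof (rule ccontr)
      assume "c \<notin> ?bad"
      then have "meager {a. (a, c) \<in> K}" if "K \<in> \<K>" for K
      proof (intro nowhere_dense_imp_meager nowhere_dense_closedI)
        show "closed {a. (a, c) \<in> K}" using \<K>(2)[OF that] by (simp add: closed_section)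
        show "interior {a. (a, c) \<in> K} = {}" using \<open>c \<notin> ?bad\<close> that by simp
      qed
      then have "meager (\<Union>K\<in>\<K>. {a. (a, c) \<in> K})" using \<K>(1) by (intro meager_UN)
      moreover have "{a. (a, c) \<in> Q} \<subseteq> (\<Union>K\<in>\<K>. {a. (a, c) \<in> K})" using \<K>(3) by blast
      ultimately show False using c meager_subset by blast
    qed
  qed
  ultimately show ?thesis by (rule meager_subset)
qed

instance bool :: second_countable_topology
proof
  show "\<exists>\<B>::bool set set. countable \<B> \<and> open = generate_topology \<B>"
    by (intro exI[of _ UNIV]) (auto simp: generate_topology.Basis open_discrete)
qed

type_synonym cantor = "nat \<Rightarrow> bool"

lemma compact_space_cantor: "compact_space (euclidean :: cantor topology)"
proof -
  have "compact_space (euclidean :: bool topology)"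
    by (simp add: compact_space_def compactin_euclidean_iff finite_imp_compact)
  then have "compact_space (product_topology (\<lambda>_::nat. (euclidean :: bool topology)) UNIV)"
    by (simp add: compact_space_product_topology)
  then show ?thesis by (simp add: euclidean_product_topology)
qed

lemma Hausdorff_space_cantor: "Hausdorff_space (euclidean :: cantor topology)"
proof -
  have "Hausdorff_space (product_topology (\<lambda>_::nat. (euclidean :: bool topology)) UNIV)"
    by (simp add: Hausdorff_space_product_topology Hausdorff_space_euclidean_t2)
  then show ?thesis by (simp add: euclidean_product_topology)
qed

lemma not_meager_UNIV_cantor: "\<not> meager (UNIV :: cantor set)"
  using compact_space_cantor Hausdorff_space_cantor by (rule not_meager_UNIV_compact_Hausdorff)

lemma not_open_singleton_cantor: "\<not> open {x :: cantor}"
proof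
  assume "open {x}"
  then have "openin (product_topology (\<lambda>_. euclidean) UNIV) {x}"
    by (simp add: euclidean_product_topology)
  then obtain X where X: "x \<in> (\<Pi>\<^sub>E n\<in>UNIV. X n)" "finite {n. X n \<noteq> topspace euclidean}"
    "(\<Pi>\<^sub>E n\<in>UNIV. X n) \<subseteq> {x}"
    using product_topology_open_contains_basis[of "\<lambda>_. euclidean" UNIV "{x}" x] by blast
  obtain n where "X n = UNIV" using ex_new_if_finite[OF infinite_UNIV_nat X(2)] by auto
  then have "x(n := \<not> x n) \<in> (\<Pi>\<^sub>E n\<in>UNIV. X n)" using X(1) by (simp add: PiE_iff)
  then have "x(n := \<not> x n) = x" using X(3) by blast
  then show False by (metis fun_upd_same)
qed

lemma meager_singleton_cantor: "meager {x :: cantor}"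
proof -
  have "closed {x}"
    unfolding closed_closedin
    by (rule closedin_t1_singleton[OF Hausdorff_imp_t1_space[OF Hausdorff_space_cantor]]) simp
  then show ?thesis
    using not_open_singleton_cantor by (simp add: nowhere_dense_imp_meager nowhere_dense_singleton)
qed

lemma infinite_UNIV_cantor: "infinite (UNIV :: cantor set)"
proof -
  have "inj (\<lambda>n :: nat. \<lambda>m. m = n)" by (auto simp: inj_def fun_eq_iff)
  then show ?thesis by (meson range_inj_infinite infinite_super subset_UNIV)
qed

definition cantor_pair :: "cantor \<times> cantor \<Rightarrow> cantor" where
  "cantor_pair p = (\<lambda>n. if even n then fst p (n div 2) else snd p (n div 2))"

definition cantor_unpair :: "cantor \<Rightarrow> cantor \<times> cantor" where
  "cantor_unpair z = (\<lambda>n. z (2 * n), \<lambda>n. z (2 * n + 1))"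

lemma cantor_pair_unpair [simp]: "cantor_pair (cantor_unpair z) = z"
proof
  fix n :: nat
  show "cantor_pair (cantor_unpair z) n = z n"
    by (cases "even n") (auto simp: cantor_pair_def cantor_unpair_def elim!: evenE oddE)
qed

lemma cantor_unpair_pair [simp]: "cantor_unpair (cantor_pair p) = p"
  by (cases p) (simp add: cantor_pair_def cantor_unpair_def)

lemma homeomorphism_cantor_unpair: "homeomorphism UNIV UNIV cantor_unpair cantor_pair"
proof -
  have "continuous_on UNIV cantor_unpair"
    unfolding cantor_unpair_def by (intro continuous_intros continuous_on_coordinatewise_then_product) simp_all
  moreover have "continuous_on UNIV cantor_pair"
    unfolding cantor_pair_def
  proof (rule continuous_on_coordinatewise_then_product)
    fix n :: nat
    show "continuous_on UNIV (\<lambda>p :: cantor \<times> cantor. if even n then fst p (n div 2) else snd p (n div 2))"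
      by (cases "even n") (simp_all add: continuous_on_product_then_coordinatewise continuous_intros)
  qed
  ultimately show ?thesis
    by (intro homeomorphismI) (auto intro: image_eqI[of _ _ "cantor_unpair _"] image_eqI[of _ _ "cantor_pair _"])
qed

lemma homeomorphism_cantor_pair: "homeomorphism UNIV UNIV cantor_pair cantor_unpair"
  using homeomorphism_cantor_unpair by (rule homeomorphism_symD)

lemma inj_cantor_pair: "inj cantor_pair"
  by (rule inj_on_inverseI[of _ cantor_unpair]) simp

lemma mem_image_cantor_unpair_iff: "x \<in> cantor_unpair ` q \<longleftrightarrow> cantor_pair x \<in> q"
proof
  assume "x \<in> cantor_unpair ` q"
  then show "cantor_pair x \<in> q" by auto
next
  assume "cantor_pair x \<in> q"
  then have "cantor_unpair (cantor_pair x) \<in> cantor_unpair ` q" by (rule imageI)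
  then show "x \<in> cantor_unpair ` q" by simp
qed

definition cantor_xor :: "cantor \<Rightarrow> cantor \<Rightarrow> cantor" where
  "cantor_xor x y = (\<lambda>n. x n \<noteq> y n)"

lemma cantor_xor_cancel_left [simp]: "cantor_xor x (cantor_xor x y) = y"
  by (auto simp: cantor_xor_def)

lemma cantor_xor_cancel_right [simp]: "cantor_xor (cantor_xor x y) y = x"
  by (auto simp: cantor_xor_def)

lemma homeomorphism_cantor_xor: "homeomorphism UNIV UNIV (cantor_xor x) (cantor_xor x)"
proof -
  have "continuous_on UNIV (cantor_xor x)"
    unfolding cantor_xor_def
  proof (rule continuous_on_coordinatewise_then_product)
    fix n :: nat
    have "continuous_on UNIV (\<lambda>b :: bool. x n \<noteq> b)"
      by (simp add: continuous_on_open_vimage open_discrete)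
    then show "continuous_on UNIV (\<lambda>y :: cantor. x n \<noteq> y n)"
      by (rule continuous_on_compose2[OF _ continuous_on_product_coordinates]) simp
  qed
  then show ?thesis
    by (intro homeomorphismI) (auto intro: image_eqI[of _ _ "cantor_xor x _"])
qed

text \<open>Since \<open>N \<union> (x \<oplus> N)\<close> is meager, every \<open>x\<close> is \<open>y \<oplus> (x \<oplus> y)\<close> with both
  summands outside \<open>N\<close>.\<close>

lemma card_of_UNIV_le_comeager:
  assumes "meager (N :: cantor set)"
  shows "(card_of (UNIV :: cantor set), card_of (- N)) \<in> ordLeq"
proof -
  have "UNIV = (\<lambda>(a, b). cantor_xor a b) ` ((- N) \<times> (- N))"
  proof (intro set_eqI iffI)
    fix x :: cantor
    have "meager (N \<union> cantor_xor x ` N)"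
      using assms by (intro meager_Un meager_homeomorphism_image[OF homeomorphism_cantor_xor])
    then obtain y where y: "y \<notin> N" "y \<notin> cantor_xor x ` N"
      using not_meager_UNIV_cantor by (metis UnCI UNIV_eq_I)
    have "cantor_xor x y \<notin> N"
      using y(2) by (metis cantor_xor_cancel_left image_eqI)
    moreover have "x = cantor_xor y (cantor_xor x y)" by (auto simp: cantor_xor_def)
    ultimately show "x \<in> (\<lambda>(a, b). cantor_xor a b) ` ((- N) \<times> (- N))"
      using y(1) by (intro image_eqI[of _ _ "(y, cantor_xor x y)"]) auto
  qed simp
  then have le: "(card_of (UNIV :: cantor set), card_of ((- N) \<times> (- N))) \<in> ordLeq"
    by (metis card_of_image)
  have "infinite (- N)"
  proof
    assume "finite (- N)"
    then have "finite (UNIV :: cantor set)"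
      using \<open>UNIV = _\<close> by (metis finite_SigmaI finite_imageI)
    then show False using infinite_UNIV_cantor by simp
  qed
  then have "(card_of ((- N) \<times> (- N)), card_of (- N)) \<in> ordIso"
    by (rule card_of_Times_same_infinite)
  then show ?thesis using le by (rule ordLeq_ordIso_trans[rotated])
qed

text \<open>A closed set is determined by the basic open sets inside its complement.\<close>

lemma ex_inj_on_closed_nat_sets:
  "\<exists>code :: 'a::second_countable_topology set \<Rightarrow> nat set. inj_on code {K. closed K}"
proof -
  obtain \<B> :: "'a set set" where \<B>: "countable \<B>" "topological_basis \<B>"
    using ex_countable_basis by blast
  define code where "code K = to_nat_on \<B> ` {B \<in> \<B>. B \<subseteq> - K}" for K :: "'a set"
  have "- K = \<Union>{B \<in> \<B>. B \<subseteq> - K}" if "closed K" for K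
  proof (intro equalityI subsetI)
    fix x assume "x \<in> - K"
    moreover have "open (- K)" using that by (simp add: open_Compl)
    ultimately obtain B where "B \<in> \<B>" "x \<in> B" "B \<subseteq> - K" using topological_basisE[OF \<B>(2)] by metis
    then show "x \<in> \<Union>{B \<in> \<B>. B \<subseteq> - K}" by blast
  qed blast
  moreover have "{B \<in> \<B>. B \<subseteq> - K} = {B \<in> \<B>. B \<subseteq> - K'}" if "code K = code K'" for K K'
    using that inj_on_image_eq_iff[OF inj_on_to_nat_on[OF \<B>(1)]] unfolding code_def by blast
  ultimately have "inj_on code {K. closed K}"
    by (intro inj_onI) (metis (no_types, lifting) compl_eq_compl_iff mem_Collect_eq)
  then show ?thesis by blast
qed

definition meager_Fsigma_base :: "cantor set set" where
  "meager_Fsigma_base = (\<lambda>K. \<Union>(range K)) ` {K :: nat \<Rightarrow> cantor set. \<forall>n. closed (K n) \<and> interior (K n) = {}}"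

lemma meager_cofinal_family_Fsigma_base: "meager_cofinal_family meager_Fsigma_base"
  unfolding meager_cofinal_family_def
proof (intro conjI ballI subsetI)
  fix B assume "B \<in> meager_Fsigma_base"
  then obtain K :: "nat \<Rightarrow> cantor set" where K: "\<And>n. closed (K n) \<and> interior (K n) = {}" "B = \<Union>(range K)"
    unfolding meager_Fsigma_base_def by auto
  have "meager (K n)" for n
    using K(1)[of n] by (simp add: nowhere_dense_imp_meager nowhere_dense_closedI)
  then have "meager (\<Union>n. K n)" by (intro meager_UN) simp_all
  then show "B \<in> meager_ideal" unfolding meager_ideal_def K(2) by simp
next
  fix M assume "M \<in> meager_ideal"
  then have "meager M" unfolding meager_ideal_def by simp
  then obtain \<K> where \<K>: "countable \<K>" "\<And>K. K \<in> \<K> \<Longrightarrow> closed K \<and> interior K = {}" "M \<subseteq> \<Union>\<K>"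
    using meager_closed_cover by blast
  define K where "K = from_nat_into (insert {} \<K>)"
  have range_K: "range K = insert {} \<K>"
    unfolding K_def using \<K>(1) by (intro range_from_nat_into) simp_all
  have K: "closed (K n) \<and> interior (K n) = {}" for n
  proof -
    have "K n \<in> insert {} \<K>" using range_K by blast
    then show ?thesis using \<K>(2) by auto
  qed
  have "\<Union>(range K) \<in> meager_Fsigma_base"
    unfolding meager_Fsigma_base_def by (intro imageI) (simp add: K)
  moreover have "M \<subseteq> \<Union>(range K)" using \<K>(3) range_K by simp
  ultimately show "\<exists>B\<in>meager_Fsigma_base. M \<subseteq> B" by (rule bexI[rotated])
qed

lemma card_of_meager_Fsigma_base: "(card_of meager_Fsigma_base, card_of (UNIV :: cantor set)) \<in> ordLeq"
proof -
  obtain code :: "cantor set \<Rightarrow> nat set" where code: "inj_on code {K. closed K}"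
    using ex_inj_on_closed_nat_sets by blast
  define \<S> where "\<S> = {K :: nat \<Rightarrow> cantor set. \<forall>n. closed (K n) \<and> interior (K n) = {}}"
  define seq_code :: "(nat \<Rightarrow> cantor set) \<Rightarrow> cantor" where
    "seq_code K = (\<lambda>k. snd (prod_decode k) \<in> code (K (fst (prod_decode k))))" for K
  have "inj_on seq_code \<S>"
  proof (rule inj_onI)
    fix K K' assume K: "K \<in> \<S>" and K': "K' \<in> \<S>" and eq: "seq_code K = seq_code K'"
    show "K = K'"
    proof
      fix n
      have "code (K n) = code (K' n)"
        using fun_cong[OF eq, of "prod_encode (n, m)" for m] unfolding seq_code_def by auto
      then show "K n = K' n" using K K' code unfolding \<S>_def by (auto dest: inj_onD)
    qed
  qed
  then have "(card_of \<S>, card_of (UNIV :: cantor set)) \<in> ordLeq"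
    using card_of_ordLeq[of \<S> "UNIV :: cantor set"] by blast
  moreover have "(card_of meager_Fsigma_base, card_of \<S>) \<in> ordLeq"
    unfolding meager_Fsigma_base_def \<S>_def by (rule card_of_image)
  ultimately show ?thesis by (rule ordLeq_transitive[rotated])
qed

lemma comparable_family_meager_cofinal_family:
  assumes "meager_cofinal_family G"
  shows "comparable_family (meager_ideal - {{}}) (\<subseteq>) (G - {{}})"
  using assms unfolding meager_cofinal_family_def comparable_family_def by blast

lemma meager_cofinal_family_of_sections:
  assumes F: "comparable_family (meager_ideal - {{}}) (\<subseteq>) F"
    and s: "\<And>q. q \<in> F \<Longrightarrow> \<exists>z\<in>q. snd (cantor_unpair z) = s q"
    and c: "\<And>q. q \<in> F \<Longrightarrow> meager {a. cantor_pair (a, c q) \<in> q} \<and> c q \<notin> s ` F"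
  shows "meager_cofinal_family ((\<lambda>q. {a. cantor_pair (a, c q) \<in> q}) ` F)"
  unfolding meager_cofinal_family_def
proof (intro conjI ballI)
  show "(\<lambda>q. {a. cantor_pair (a, c q) \<in> q}) ` F \<subseteq> meager_ideal"
    using c unfolding meager_ideal_def by auto
  have comparable: "\<exists>q\<in>F. p \<subseteq> q \<or> q \<subseteq> p" if "meager p" and "p \<noteq> {}" for p
  proof -
    have "p \<in> meager_ideal - {{}}" using that unfolding meager_ideal_def by simp
    then show ?thesis using F unfolding comparable_family_def by blast
  qed
  obtain q\<^sub>0 where "q\<^sub>0 \<in> F" using comparable[OF meager_singleton_cantor[of "\<lambda>_. False"]] by blast
  fix M assume "M \<in> meager_ideal"
  then have "meager M" unfolding meager_ideal_def by simp
  show "\<exists>B\<in>(\<lambda>q. {a. cantor_pair (a, c q) \<in> q}) ` F. M \<subseteq> B"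
  proof (cases "M = {}")
    case True
    then show ?thesis using \<open>q\<^sub>0 \<in> F\<close> by blast
  next
    case False
    then obtain a where "a \<in> M" by blast
    define p where "p = cantor_pair ` (M \<times> (- s ` F))"
    have p_iff: "cantor_pair (x, y) \<in> p \<longleftrightarrow> x \<in> M \<and> y \<notin> s ` F" for x y
      unfolding p_def by (simp add: inj_image_mem_iff[OF inj_cantor_pair])
    have "meager (cantor_pair ` (M \<times> UNIV))"
      using \<open>meager M\<close> by (intro meager_homeomorphism_image[OF homeomorphism_cantor_pair] meager_Times_UNIV)
    moreover have "p \<subseteq> cantor_pair ` (M \<times> UNIV)" unfolding p_def by (intro image_mono) auto
    ultimately have "meager p" by (rule meager_subset)
    moreover have "cantor_pair (a, c q\<^sub>0) \<in> p" using p_iff \<open>a \<in> M\<close> c[OF \<open>q\<^sub>0 \<in> F\<close>] by simp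
    ultimately obtain q where q: "q \<in> F" "p \<subseteq> q \<or> q \<subseteq> p" using comparable by blast
    have "\<not> q \<subseteq> p"
    proof
      assume "q \<subseteq> p"
      obtain z where "z \<in> q" and z: "snd (cantor_unpair z) = s q" using s[OF q(1)] by blast
      then have "cantor_pair (cantor_unpair z) \<in> p" using \<open>q \<subseteq> p\<close> by auto
      then have "snd (cantor_unpair z) \<notin> s ` F"
        using p_iff[of "fst (cantor_unpair z)" "snd (cantor_unpair z)"] by simp
      then show False using z q(1) by simp
    qed
    then have "p \<subseteq> q" using q(2) by blast
    then have "M \<subseteq> {x. cantor_pair (x, c q) \<in> q}" using p_iff c[OF q(1)] by auto
    then show ?thesis using q(1) by blast
  qed
qed

lemma ex_meager_cofinal_family_card_le_comparable_family:
  assumes F: "comparable_family (meager_ideal - {{}}) (\<subseteq>) F"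
  shows "\<exists>G. meager_cofinal_family G \<and> (card_of G, card_of F) \<in> ordLeq"
proof -
  have F_meager: "meager q" "q \<noteq> {}" if "q \<in> F" for q
  proof -
    have "q \<in> meager_ideal - {{}}" using F that unfolding comparable_family_def by blast
    then show "meager q" "q \<noteq> {}" unfolding meager_ideal_def by simp_all
  qed
  define s where "s q = snd (cantor_unpair (SOME z. z \<in> q))" for q
  define bad where "bad q = {c. \<not> meager {a. cantor_pair (a, c) \<in> q}}" for q
  have bad_meager: "meager (bad q)" if "q \<in> F" for q
  proof -
    have "meager (cantor_unpair ` q)"
      using F_meager(1)[OF that] by (rule meager_homeomorphism_image[OF homeomorphism_cantor_unpair])
    then have "meager {c. \<not> meager {a. (a, c) \<in> cantor_unpair ` q}}"
      by (rule meager_nonmeager_sections)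
    then show ?thesis unfolding bad_def by (simp add: mem_image_cantor_unpair_iff)
  qed
  show ?thesis
  proof (cases "\<exists>q\<in>F. - bad q \<subseteq> s ` F")
    case True
    then obtain q where "q \<in> F" "- bad q \<subseteq> s ` F" by blast
    have "(card_of (UNIV :: cantor set), card_of (- bad q)) \<in> ordLeq"
      using bad_meager[OF \<open>q \<in> F\<close>] by (rule card_of_UNIV_le_comeager)
    moreover have "(card_of (- bad q), card_of F) \<in> ordLeq"
      using card_of_mono1[OF \<open>- bad q \<subseteq> s ` F\<close>] card_of_image[of s F] by (rule ordLeq_transitive)
    ultimately have "(card_of (UNIV :: cantor set), card_of F) \<in> ordLeq"
      by (rule ordLeq_transitive)
    then have "(card_of meager_Fsigma_base, card_of F) \<in> ordLeq"
      using card_of_meager_Fsigma_base by (rule ordLeq_transitive[rotated])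
    then show ?thesis using meager_cofinal_family_Fsigma_base by blast
  next
    case False
    then have "\<forall>q\<in>F. \<exists>c. c \<notin> bad q \<and> c \<notin> s ` F" by blast
    then obtain c where c: "\<forall>q\<in>F. c q \<notin> bad q \<and> c q \<notin> s ` F" by (rule bchoice[THEN exE])
    have "meager_cofinal_family ((\<lambda>q. {a. cantor_pair (a, c q) \<in> q}) ` F)"
    proof (rule meager_cofinal_family_of_sections[OF F])
      show "\<exists>z\<in>q. snd (cantor_unpair z) = s q" if "q \<in> F" for q
        using F_meager(2)[OF that] unfolding s_def by (metis all_not_in_conv someI_ex)
      show "meager {a. cantor_pair (a, c q) \<in> q} \<and> c q \<notin> s ` F" if "q \<in> F" for q
        using c that unfolding bad_def by simp
    qed
    then show ?thesis using card_of_image by blast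
  qed
qed

theorem mainTheorem14:
  shows "(\<forall>F. comparable_family (meager_ideal - {{}}) (\<subseteq>) F \<longrightarrow>
            (\<exists>G. meager_cofinal_family G \<and> (card_of G, card_of F) \<in> ordLeq))
       \<and> (\<forall>G. meager_cofinal_family G \<longrightarrow>
            (\<exists>F. comparable_family (meager_ideal - {{}}) (\<subseteq>) F \<and> (card_of F, card_of G) \<in> ordLeq))"
  using ex_meager_cofinal_family_card_le_comparable_family
    comparable_family_meager_cofinal_family card_of_mono1[OF Diff_subset]
  by blast

end
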